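(* No vertex cover-based algorithm has competitive ratio better than $\frac32$ for the hypergraph orientation problem: for every $\eta>0$ there is an instance on which every vertex cover-based algorithm $A$ has $\mathbb E[A]\ge(\frac32-\eta)\mathbb E[\mathrm{OPT}]$. This holds even within each of the following classes of instances: (1) instances with a single hyperedge (with non-uniform query costs); (2) instances with uniform query costs whose vertex cover instance $\bar G$ is bipartite; (3) graph orientation instances with uniform query costs whose graph is not bipartite.
   Context: An instance of the hypergraph orientation problem consists of a hypergraph $H=(V,E)$ and, for each vertex $v\in V$, a query cost $c_v\ge 0$ and a continuous probability distribution $d_v$; $I_v=(\ell_v,r_v)$ is the minimal open interval containing its support. The weights $w_v\sim d_v$ are drawn independently; querying $v$ reveals $w_v$ at cost $c_v$. For a realization, $Q\subseteq V$ is a feasible query set if knowing $w_u$ for $u\in Q$ and only the intervals $I_u$ for $u\notin Q$ suffices to identify a minimum-weight vertex of every hyperedge; $\mathrm{OPT}(R)$ is the minimum cost of a feasible query set for realization $R$, and $\mathbb E[\mathrm{OPT}]$ its expectation; $\mathbb E[A]$ is the expected query cost of algorithm $A$. Uniform query costs means $c_v=1$ for all $v$; the graph orientation problem is the case where all hyperedges have two vertices. The leftmost vertex of a hyperedge is one with minimum $\ell_v$. The vertex cover instance of $H$ is the graph $\bar G=(V,\bar E)$ where $\{v,u\}\in\bar E$ iff some hyperedge $F$ contains both $u,v$, $v$ is leftmost in $F$, and $I_v\cap I_u\ne\emptyset$. A vertex cover-based algorithm (1) first non-adaptively queries some vertex cover $VC$ of $\bar G$, and then (2) for each hyperedge whose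 minimum-weight vertex is not yet known, queries its unqueried vertices in order of non-decreasing left endpoints until the minimum-weight vertex of the hyperedge is known. *)

theory Defs
  imports "HOL-Probability.Probability"
begin

(* Instances: vertices are natural numbers; V finite vertex set, E set of hyperedges,
   c query costs, d v the distribution (a measure on the reals) of the weight of v. *)

definition lo :: "(nat \<Rightarrow> real measure) \<Rightarrow> nat \<Rightarrow> real" where
  "lo d v = Sup {a. measure (d v) {..a} = 0}"

definition hi :: "(nat \<Rightarrow> real measure) \<Rightarrow> nat \<Rightarrow> real" where
  "hi d v = Inf {b. measure (d v) {b..} = 0}"

definition ival :: "(nat \<Rightarrow> real measure) \<Rightarrow> nat \<Rightarrow> real set" where
  "ival d v = {lo d v<..<hi d v}"

definition valid_instance ::
  "nat set \<Rightarrow> nat set set \<Rightarrow> (nat \<Rightarrow> real) \<Rightarrow> (nat \<Rightarrow> real measure) \<Rightarrow> bool" where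
  "valid_instance V E c d \<longleftrightarrow>
     finite V \<and> (\<forall>F\<in>E. F \<subseteq> V \<and> 2 \<le> card F) \<and>
     (\<forall>v\<in>V. 0 \<le> c v) \<and>
     (\<forall>v\<in>V. prob_space (d v) \<and> sets (d v) = sets borel
              \<and> absolutely_continuous lborel (d v)
              \<and> (\<exists>a b. measure (d v) {..a} = 0 \<and> measure (d v) {b..} = 0))"

definition resolved ::
  "(nat \<Rightarrow> real measure) \<Rightarrow> nat set \<Rightarrow> (nat \<Rightarrow> real) \<Rightarrow> nat set \<Rightarrow> bool" where
  "resolved d Q w F \<longleftrightarrow>
     (\<exists>v\<in>F. \<forall>w'. (\<forall>u\<in>F. (u \<in> Q \<longrightarrow> w' u = w u) \<and> (u \<notin> Q \<longrightarrow> w' u \<in> ival d u))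
                 \<longrightarrow> (\<forall>u\<in>F. w' v \<le> w' u))"

definition feasible ::
  "nat set set \<Rightarrow> (nat \<Rightarrow> real measure) \<Rightarrow> nat set \<Rightarrow> (nat \<Rightarrow> real) \<Rightarrow> bool" where
  "feasible E d Q w \<longleftrightarrow> (\<forall>F\<in>E. resolved d Q w F)"

definition OPT ::
  "nat set \<Rightarrow> nat set set \<Rightarrow> (nat \<Rightarrow> real) \<Rightarrow> (nat \<Rightarrow> real measure) \<Rightarrow> (nat \<Rightarrow> real) \<Rightarrow> real" where
  "OPT V E c d w = Min {sum c Q | Q. Q \<subseteq> V \<and> feasible E d Q w}"

definition realizations :: "nat set \<Rightarrow> (nat \<Rightarrow> real measure) \<Rightarrow> (nat \<Rightarrow> real) measure" where
  "realizations V d = (\<Pi>\<^sub>M v\<in>V. d v)"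

definition expected_OPT ::
  "nat set \<Rightarrow> nat set set \<Rightarrow> (nat \<Rightarrow> real) \<Rightarrow> (nat \<Rightarrow> real measure) \<Rightarrow> real" where
  "expected_OPT V E c d = (\<integral>w. OPT V E c d w \<partial>realizations V d)"

definition vc_edge :: "nat set set \<Rightarrow> (nat \<Rightarrow> real measure) \<Rightarrow> nat \<Rightarrow> nat \<Rightarrow> bool" where
  "vc_edge E d v u \<longleftrightarrow> u \<noteq> v \<and>
     (\<exists>F\<in>E. u \<in> F \<and> v \<in> F \<and> (\<forall>x\<in>F. lo d v \<le> lo d x) \<and> ival d v \<inter> ival d u \<noteq> {})"

definition vc_graph_edge :: "nat set set \<Rightarrow> (nat \<Rightarrow> real measure) \<Rightarrow> nat \<Rightarrow> nat \<Rightarrow> bool" where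
  "vc_graph_edge E d u v \<longleftrightarrow> vc_edge E d u v \<or> vc_edge E d v u"

definition is_vertex_cover :: "nat set \<Rightarrow> nat set set \<Rightarrow> (nat \<Rightarrow> real measure) \<Rightarrow> nat set \<Rightarrow> bool" where
  "is_vertex_cover V E d VC \<longleftrightarrow> VC \<subseteq> V \<and> (\<forall>u v. vc_graph_edge E d u v \<longrightarrow> u \<in> VC \<or> v \<in> VC)"

definition vc_bipartite :: "nat set \<Rightarrow> nat set set \<Rightarrow> (nat \<Rightarrow> real measure) \<Rightarrow> bool" where
  "vc_bipartite V E d \<longleftrightarrow>
     (\<exists>X \<subseteq> V. \<forall>u v. vc_graph_edge E d u v \<longrightarrow> (u \<in> X \<longleftrightarrow> v \<notin> X))"

(* bipartiteness of a graph whose edges are 2-element sets *)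
definition graph_bipartite :: "nat set \<Rightarrow> nat set set \<Rightarrow> bool" where
  "graph_bipartite V E \<longleftrightarrow> (\<exists>X \<subseteq> V. \<forall>F\<in>E. card (F \<inter> X) = 1)"

(* Already queried vertices
   are inserted again, which is a no-op. *)
fun scan :: "(nat set \<Rightarrow> bool) \<Rightarrow> nat list \<Rightarrow> nat set \<Rightarrow> nat set" where
  "scan res [] Q = Q"
| "scan res (x # xs) Q = (if res Q then Q else scan res xs (insert x Q))"

definition vc_alg_queries ::
  "(nat \<Rightarrow> real measure) \<Rightarrow> nat set \<Rightarrow> nat set list \<Rightarrow> (nat set \<Rightarrow> nat list)
     \<Rightarrow> (nat \<Rightarrow> real) \<Rightarrow> nat set" where
  "vc_alg_queries d VC Es ordF w =
     foldl (\<lambda>Q F. scan (\<lambda>Q'. resolved d Q' w F) (ordF F) Q) VC Es"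

definition vc_alg_valid ::
  "nat set \<Rightarrow> nat set set \<Rightarrow> (nat \<Rightarrow> real measure) \<Rightarrow> nat set \<Rightarrow> nat set list
     \<Rightarrow> (nat set \<Rightarrow> nat list) \<Rightarrow> bool" where
  "vc_alg_valid V E d VC Es ordF \<longleftrightarrow>
     is_vertex_cover V E d VC \<and> distinct Es \<and> set Es = E \<and>
     (\<forall>F\<in>E. distinct (ordF F) \<and> set (ordF F) = F
             \<and> sorted_wrt (\<lambda>a b. lo d a \<le> lo d b) (ordF F))"

definition expected_alg ::
  "nat set \<Rightarrow> (nat \<Rightarrow> real) \<Rightarrow> (nat \<Rightarrow> real measure) \<Rightarrow> nat set \<Rightarrow> nat set list
     \<Rightarrow> (nat set \<Rightarrow> nat list) \<Rightarrow> real" where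
  "expected_alg V c d VC Es ordF =
     (\<integral>w. sum c (vc_alg_queries d VC Es ordF w) \<partial>realizations V d)"

definition lower_bound_instance ::
  "real \<Rightarrow> nat set \<Rightarrow> nat set set \<Rightarrow> (nat \<Rightarrow> real) \<Rightarrow> (nat \<Rightarrow> real measure) \<Rightarrow> bool" where
  "lower_bound_instance \<eta> V E c d \<longleftrightarrow>
     valid_instance V E c d \<and> 0 < expected_OPT V E c d \<and>
     (\<forall>VC Es ordF. vc_alg_valid V E d VC Es ordF \<longrightarrow>
        (3/2 - \<eta>) * expected_OPT V E c d \<le> expected_alg V c d VC Es ordF)"

end

theory Submission
  imports Defs
begin

(*
  All instances are built from one gadget: a centre 0, whose weight is uniform on
  (1/2, 1) u (10, 21/2) and hence light or heavy with probability 1/2 each, and n pairs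
  (a_i, b_i) with I_a = (0, 10) and I_b = (1, 11). The intervals of a pair overlap in an edge
  of which a_i is leftmost, so every vertex cover contains a_i or b_i. If it contains a_i, then a
  heavy centre forces the algorithm to query b_i as well (unless w(a_i) is tiny); if it contains
  only b_i, then a light centre forces it to query a_i, the leftmost vertex. Either way a pair
  costs about 3/2 in expectation. Knowing the realisation, an optimal query set takes the centre
  and a_i when the centre is light, b_i when it is heavy, and the other vertex of a pair only with
  probability O(delta). Hence E[OPT] <= c_0 + n (1 + O(delta)) while E[A] >= n (3/2 - O(delta)),
  and either c_0 = 0 and n = 1, or c_0 = 1 and n large, gives the ratio 3/2 - O(eta). For the
  triangle instances the mass of a_i is moved to (0, 1) u (10 - delta, 10), so that the edge
  {a_i, b_i}, which lacks the centre, is still settled by one of its weights with high probability.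
*)

section \<open>Resolved hyperedges and optimal query sets\<close>

lemma resolved_iff_bounds:
  assumes "\<forall>u\<in>F. lo d u < hi d u"
  shows "resolved d Q w F \<longleftrightarrow>
    (\<exists>v\<in>F. \<forall>u\<in>F. u \<noteq> v \<longrightarrow>
       (if v \<in> Q then w v else hi d v) \<le> (if u \<in> Q then w u else lo d u))"
proof
  assume "\<exists>v\<in>F. \<forall>u\<in>F. u \<noteq> v \<longrightarrow>
            (if v \<in> Q then w v else hi d v) \<le> (if u \<in> Q then w u else lo d u)"
  then obtain v where v: "v \<in> F" and bound: "\<forall>u\<in>F. u \<noteq> v \<longrightarrow>
      (if v \<in> Q then w v else hi d v) \<le> (if u \<in> Q then w u else lo d u)"
    by blast
  show "resolved d Q w F"
    unfolding resolved_def
  proof (intro bexI[OF _ v] allI impI ballI)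
    fix w' u
    assume w': "\<forall>u\<in>F. (u \<in> Q \<longrightarrow> w' u = w u) \<and> (u \<notin> Q \<longrightarrow> w' u \<in> ival d u)"
      and u: "u \<in> F"
    have "w' v \<le> (if v \<in> Q then w v else hi d v)"
      and "(if u \<in> Q then w u else lo d u) \<le> w' u"
      using w' u v by (auto simp: ival_def)
    moreover have "u \<noteq> v \<Longrightarrow>
        (if v \<in> Q then w v else hi d v) \<le> (if u \<in> Q then w u else lo d u)"
      using bound u by blast
    ultimately show "w' v \<le> w' u"
      by (cases "u = v") auto
  qed
next
  assume "resolved d Q w F"
  then obtain v where v: "v \<in> F" and min: "\<forall>w'.
      (\<forall>u\<in>F. (u \<in> Q \<longrightarrow> w' u = w u) \<and> (u \<notin> Q \<longrightarrow> w' u \<in> ival d u)) \<longrightarrow> (\<forall>u\<in>F. w' v \<le> w' u)"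
    unfolding resolved_def by blast
  define m where "m x = (if x \<in> Q then w x else (lo d x + hi d x) / 2)" for x
  have m: "\<forall>u\<in>F. (u \<in> Q \<longrightarrow> m u = w u) \<and> (u \<notin> Q \<longrightarrow> m u \<in> ival d u)"
    using assms by (auto simp: m_def ival_def)
  show "\<exists>v\<in>F. \<forall>u\<in>F. u \<noteq> v \<longrightarrow>
          (if v \<in> Q then w v else hi d v) \<le> (if u \<in> Q then w u else lo d u)"
  proof (intro bexI[OF _ v] ballI impI, rule ccontr)
    fix u
    assume u: "u \<in> F" and uv: "u \<noteq> v"
      and gap: "\<not> (if v \<in> Q then w v else hi d v) \<le> (if u \<in> Q then w u else lo d u)"
    have lu: "lo d u < hi d u" and lv: "lo d v < hi d v"
      using assms u v by auto
    \<comment> \<open>A realisation consistent with the information in which u is strictly lighter than v.\<close>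
    obtain s t where st: "t < s" "v \<in> Q \<longrightarrow> s = w v" "v \<notin> Q \<longrightarrow> s \<in> ival d v"
        "u \<in> Q \<longrightarrow> t = w u" "u \<notin> Q \<longrightarrow> t \<in> ival d u"
    proof (cases "v \<in> Q"; cases "u \<in> Q")
      assume "v \<in> Q" "u \<in> Q"
      then show ?thesis
        using gap that[of "w u" "w v"] by auto
    next
      assume Q: "v \<in> Q" "u \<notin> Q"
      define t where "t = (lo d u + min (w v) (hi d u)) / 2"
      have "t < w v" "t \<in> ival d u"
        using gap Q lu by (auto simp: t_def ival_def min_def)
      then show ?thesis
        using Q by (intro that[of t "w v"]) auto
    next
      assume Q: "v \<notin> Q" "u \<in> Q"
      define s where "s = (max (w u) (lo d v) + hi d v) / 2"
      have "w u < s" "s \<in> ival d v"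
        using gap Q lv by (auto simp: s_def ival_def max_def)
      then show ?thesis
        using Q by (intro that[of "w u" s]) auto
    next
      assume Q: "v \<notin> Q" "u \<notin> Q"
      define s where "s = (max (lo d u) (lo d v) + hi d v) / 2"
      define t where "t = (lo d u + min s (hi d u)) / 2"
      have "s \<in> ival d v" "lo d u < s"
        using gap Q lv by (auto simp: s_def ival_def max_def)
      moreover have "t < s" "t \<in> ival d u"
        using calculation lu by (auto simp: t_def ival_def min_def)
      ultimately show ?thesis
        using Q by (intro that[of t s]) auto
    qed
    define w' where "w' x = (if x = v then s else if x = u then t else m x)" for x
    have "\<forall>x\<in>F. (x \<in> Q \<longrightarrow> w' x = w x) \<and> (x \<notin> Q \<longrightarrow> w' x \<in> ival d x)"
      using m st uv by (auto simp: w'_def)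
    with min u have "w' v \<le> w' u"
      by blast
    then show False
      using st uv by (simp add: w'_def)
  qed
qed

lemma resolved_if_queried:
  assumes "finite F" "F \<noteq> {}" "F \<subseteq> Q"
  shows "resolved d Q w F"
proof -
  have "Min (w ` F) \<in> w ` F"
    using assms(1,2) by simp
  then obtain v where v: "v \<in> F" "w v = Min (w ` F)"
    by (metis imageE)
  have min: "w v \<le> w u" if "u \<in> F" for u
    using v(2) assms(1) that by simp
  show ?thesis
    unfolding resolved_def
  proof (intro bexI[OF _ v(1)] allI impI ballI)
    fix w' u
    assume "\<forall>u\<in>F. (u \<in> Q \<longrightarrow> w' u = w u) \<and> (u \<notin> Q \<longrightarrow> w' u \<in> ival d u)" and u: "u \<in> F"
    then have "w' v = w v" "w' u = w u"
      using v(1) assms(3) by auto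
    then show "w' v \<le> w' u"
      using min[OF u] by simp
  qed
qed

lemma valid_instanceD:
  assumes "valid_instance V E c d"
  shows "finite V" "\<And>F. F \<in> E \<Longrightarrow> F \<subseteq> V \<and> finite F" "\<And>v. v \<in> V \<Longrightarrow> 0 \<le> c v"
    "\<And>v. v \<in> V \<Longrightarrow> prob_space (d v)" "\<And>v. v \<in> V \<Longrightarrow> sets (d v) = sets borel"
proof -
  show V: "finite V"
    using assms by (simp add: valid_instance_def)
  show "F \<subseteq> V \<and> finite F" if "F \<in> E" for F
    using assms that finite_subset[OF _ V] by (simp add: valid_instance_def)
qed (use assms in \<open>simp_all add: valid_instance_def\<close>)

lemma feasible_all_queried:
  assumes "valid_instance V E c d"
  shows "feasible E d V w"
  unfolding feasible_def
proof
  fix F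
  assume "F \<in> E"
  then have "F \<subseteq> V" "finite F" "2 \<le> card F"
    using valid_instanceD(2)[OF assms] assms by (auto simp: valid_instance_def)
  then show "resolved d V w F"
    by (intro resolved_if_queried) auto
qed

lemma OPT_le:
  assumes "finite V" "Q \<subseteq> V" "feasible E d Q w"
  shows "OPT V E c d w \<le> sum c Q"
proof -
  have "{sum c Q | Q. Q \<subseteq> V \<and> feasible E d Q w} \<subseteq> sum c ` Pow V"
    by auto
  then have "finite {sum c Q | Q. Q \<subseteq> V \<and> feasible E d Q w}"
    using assms(1) by (auto intro: finite_subset)
  then show ?thesis
    unfolding OPT_def using assms by (intro Min_le) auto
qed

lemma OPT_geI:
  assumes "valid_instance V E c d"
    and "\<And>Q. Q \<subseteq> V \<Longrightarrow> feasible E d Q w \<Longrightarrow> x \<le> sum c Q"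
  shows "x \<le> OPT V E c d w"
proof -
  have "finite V"
    by (rule valid_instanceD(1)[OF assms(1)])
  moreover have "{sum c Q | Q. Q \<subseteq> V \<and> feasible E d Q w} \<subseteq> sum c ` Pow V"
    by auto
  ultimately have "finite {sum c Q | Q. Q \<subseteq> V \<and> feasible E d Q w}"
    by (auto intro: finite_subset)
  moreover have "{sum c Q | Q. Q \<subseteq> V \<and> feasible E d Q w} \<noteq> {}"
    using feasible_all_queried[OF assms(1)] by auto
  ultimately show ?thesis
    unfolding OPT_def using assms(2) by (subst Min_ge_iff) auto
qed

section \<open>The vertex cover-based algorithm\<close>

lemma subset_scan: "Q \<subseteq> scan res xs Q"
  by (induction xs arbitrary: Q) (auto, blast)

lemma scan_subset: "scan res xs Q \<subseteq> Q \<union> set xs"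
  by (induction xs arbitrary: Q) auto

lemma scan_resolves_or_exhausts: "res (scan res xs Q) \<or> set xs \<subseteq> scan res xs Q"
proof (induction xs arbitrary: Q)
  case (Cons x xs)
  then show ?case
    using subset_scan[of "insert x Q" res xs] by auto
qed simp

lemma vc_alg_queries_Nil [simp]: "vc_alg_queries d Q [] ordF w = Q"
  by (simp add: vc_alg_queries_def)

lemma vc_alg_queries_Cons [simp]:
  "vc_alg_queries d Q (F # Es) ordF w =
     vc_alg_queries d (scan (\<lambda>Q'. resolved d Q' w F) (ordF F) Q) Es ordF w"
  by (simp add: vc_alg_queries_def)

lemma subset_vc_alg_queries: "Q \<subseteq> vc_alg_queries d Q Es ordF w"
  by (induction Es arbitrary: Q) (auto dest: subsetD[OF subset_scan])

lemma vc_alg_queries_subset: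
  "vc_alg_queries d Q Es ordF w \<subseteq> Q \<union> (\<Union>F\<in>set Es. set (ordF F))"
proof (induction Es arbitrary: Q)
  case (Cons F Es)
  show ?case
    using Cons.IH[of "scan (\<lambda>Q'. resolved d Q' w F) (ordF F) Q"]
      scan_subset[of "\<lambda>Q'. resolved d Q' w F" "ordF F" Q] by auto
qed simp

lemma vc_alg_queries_resolves_or_exhausts:
  assumes "F \<in> set Es"
  shows "\<exists>Q' \<subseteq> vc_alg_queries d Q Es ordF w. resolved d Q' w F \<or> set (ordF F) \<subseteq> Q'"
  using assms
proof (induction Es arbitrary: Q)
  case (Cons G Es)
  show ?case
  proof (cases "F = G")
    case True
    then show ?thesis
      using scan_resolves_or_exhausts[of "\<lambda>Q'. resolved d Q' w F" "ordF F" Q]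
        subset_vc_alg_queries[of "scan (\<lambda>Q'. resolved d Q' w F) (ordF F) Q" d Es ordF w]
      by auto
  next
    case False
    then show ?thesis
      using Cons by auto
  qed
qed simp

lemma vc_alg_queries_forced:
  assumes "set Es = E" "\<forall>F\<in>E. set (ordF F) = F" and F: "F \<in> E" "x \<in> F"
    and "\<And>Q. x \<notin> Q \<Longrightarrow> \<not> resolved d Q w F"
  shows "x \<in> vc_alg_queries d VC Es ordF w"
  using vc_alg_queries_resolves_or_exhausts[of F Es d VC ordF w] assms by blast

lemma vc_alg_queries_subset_vertices:
  assumes "valid_instance V E c d" "vc_alg_valid V E d VC Es ordF"
  shows "vc_alg_queries d VC Es ordF w \<subseteq> V"
proof -
  have "VC \<subseteq> V" "\<forall>F\<in>set Es. set (ordF F) \<subseteq> V"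
    using assms(2) valid_instanceD(2)[OF assms(1)] by (auto simp: vc_alg_valid_def is_vertex_cover_def)
  then show ?thesis
    using vc_alg_queries_subset[of d VC Es ordF w] by blast
qed

lemma lower_bound_instance_mono:
  assumes lb: "lower_bound_instance \<eta> V E c d" and "\<eta> \<le> \<eta>'"
  shows "lower_bound_instance \<eta>' V E c d"
  unfolding lower_bound_instance_def
proof (intro conjI allI impI)
  show "valid_instance V E c d" and pos: "0 < expected_OPT V E c d"
    using lb by (simp_all add: lower_bound_instance_def)
  fix VC Es ordF
  assume "vc_alg_valid V E d VC Es ordF"
  then have "(3/2 - \<eta>) * expected_OPT V E c d \<le> expected_alg V c d VC Es ordF"
    using lb by (simp add: lower_bound_instance_def)
  moreover have "(3/2 - \<eta>') * expected_OPT V E c d \<le> (3/2 - \<eta>) * expected_OPT V E c d"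
    using pos \<open>\<eta> \<le> \<eta>'\<close> by (intro mult_right_mono) auto
  ultimately show "(3/2 - \<eta>') * expected_OPT V E c d \<le> expected_alg V c d VC Es ordF"
    by linarith
qed

lemma lower_bound_instanceI:
  assumes "valid_instance V E c d" "0 < expected_OPT V E c d" "expected_OPT V E c d \<le> U"
    and "\<And>VC Es ordF. vc_alg_valid V E d VC Es ordF \<Longrightarrow> L \<le> expected_alg V c d VC Es ordF"
    and "(3/2 - \<eta>) * U \<le> L" "\<eta> \<le> 3/2"
  shows "lower_bound_instance \<eta> V E c d"
  unfolding lower_bound_instance_def
proof (intro conjI allI impI assms(1,2))
  fix VC Es ordF
  assume "vc_alg_valid V E d VC Es ordF"
  have "(3/2 - \<eta>) * expected_OPT V E c d \<le> (3/2 - \<eta>) * U"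
    using assms(3,6) by (intro mult_left_mono) auto
  then show "(3/2 - \<eta>) * expected_OPT V E c d \<le> expected_alg V c d VC Es ordF"
    using assms(4)[OF \<open>vc_alg_valid V E d VC Es ordF\<close>] assms(5) by linarith
qed

lemma ratio_bound:
  fixes \<eta> \<delta> x y t cz :: real
  assumes "8 * \<delta> \<le> \<eta>" "0 \<le> x" "x \<le> 2 * \<delta>" "y \<le> \<delta>" "0 \<le> t" "0 \<le> cz" "3 * cz \<le> \<eta> * t"
  shows "(3/2 - \<eta>) * (cz + t * (1 + x)) \<le> t * (3/2 - y)"
proof -
  have "t * x \<le> 2 * (t * \<delta>)" "t * y \<le> t * \<delta>" "8 * (t * \<delta>) \<le> \<eta> * t"
    using mult_left_mono[OF assms(3) assms(5)] mult_left_mono[OF assms(4) assms(5)]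
      mult_left_mono[OF assms(1) assms(5)] by (simp_all add: ac_simps)
  moreover have "0 \<le> \<eta> * (t * x)" "0 \<le> \<eta> * cz"
    using assms by simp_all
  moreover have "(3/2 - \<eta>) * (cz + t * (1 + x))
      = 3/2 * cz - \<eta> * cz + 3/2 * t + 3/2 * (t * x) - \<eta> * t - \<eta> * (t * x)"
    "t * (3/2 - y) = 3/2 * t - t * y"
    by (simp_all add: algebra_simps)
  ultimately show ?thesis
    using assms(7) by linarith
qed

section \<open>Measurability and expectations\<close>

lemma measurable_component_borel:
  assumes "v \<in> V" "sets (d v) = sets borel"
  shows "(\<lambda>w. w v) \<in> borel_measurable (PiM V d)"
proof -
  have "(\<lambda>w. w v) \<in> PiM V d \<rightarrow>\<^sub>M d v"
    using assms(1) by (rule measurable_component_singleton)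
  moreover have "measurable (PiM V d) (d v) = measurable (PiM V d) borel"
    by (rule measurable_cong_sets) (simp_all add: assms(2))
  ultimately show ?thesis
    by simp
qed

lemma sets_Collect_resolved:
  assumes "finite F" "F \<subseteq> V" "\<forall>u\<in>F. sets (d u) = sets borel \<and> lo d u < hi d u"
  shows "{w \<in> space (PiM V d). resolved d Q w F} \<in> sets (PiM V d)"
proof -
  let ?M = "PiM V d"
  have comparison: "{w \<in> space ?M. u \<noteq> v \<longrightarrow>
          (if v \<in> Q then w v else hi d v) \<le> (if u \<in> Q then w u else lo d u)} \<in> sets ?M"
    if "u \<in> F" "v \<in> F" for u v
  proof -
    have "(\<lambda>w. w u) \<in> borel_measurable ?M" "(\<lambda>w. w v) \<in> borel_measurable ?M"
      using assms(2,3) that by (auto intro!: measurable_component_borel)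
    then show ?thesis
      by (cases "u = v"; cases "v \<in> Q"; cases "u \<in> Q") simp_all
  qed
  have "{w \<in> space ?M. resolved d Q w F} = {w \<in> space ?M. \<exists>v\<in>F. \<forall>u\<in>F. u \<noteq> v \<longrightarrow>
      (if v \<in> Q then w v else hi d v) \<le> (if u \<in> Q then w u else lo d u)}"
    using resolved_iff_bounds[of F d Q w for w] assms(3) by simp
  also have "\<dots> \<in> sets ?M"
    by (intro sets.sets_Collect_finite_Ex sets.sets_Collect_finite_All assms(1) comparison)
  finally show ?thesis .
qed

lemma sets_Collect_feasible:
  assumes "valid_instance V E c d" "\<forall>v\<in>V. lo d v < hi d v"
  shows "{w \<in> space (PiM V d). feasible E d Q w} \<in> sets (PiM V d)"
proof -
  have "finite E"
    using valid_instanceD(1,2)[OF assms(1)] by (meson Pow_iff finite_Pow_iff finite_subset subsetI)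
  then show ?thesis
    unfolding feasible_def
    using valid_instanceD[OF assms(1)] assms(2)
    by (intro sets.sets_Collect_finite_All sets_Collect_resolved) blast+
qed

(* Charging an infeasible Q the cost of the feasible set V leaves the minimum unchanged
   and exhibits OPT as a finite minimum of measurable functions. *)
lemma OPT_eq_Min_Pow:
  assumes "valid_instance V E c d"
  shows "OPT V E c d w = Min ((\<lambda>Q. if feasible E d Q w then sum c Q else sum c V) ` Pow V)"
proof -
  have "{sum c Q | Q. Q \<subseteq> V \<and> feasible E d Q w} =
        (\<lambda>Q. if feasible E d Q w then sum c Q else sum c V) ` Pow V"
    using feasible_all_queried[OF assms] by (auto simp: image_iff)
  then show ?thesis
    by (simp add: OPT_def)
qed

lemma borel_measurable_OPT:
  assumes "valid_instance V E c d" "\<forall>v\<in>V. lo d v < hi d v"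
  shows "OPT V E c d \<in> borel_measurable (realizations V d)"
  unfolding OPT_eq_Min_Pow[OF assms(1), abs_def] realizations_def
  using valid_instanceD(1)[OF assms(1)]
  by (intro borel_measurable_Min measurable_If sets_Collect_feasible[OF assms]) auto

lemma measurable_scan:
  assumes Q: "Q \<in> M \<rightarrow>\<^sub>M count_space (Pow V)" and "set xs \<subseteq> V" "finite V"
    and P: "\<And>S. S \<subseteq> V \<Longrightarrow> {w \<in> space M. P S w} \<in> sets M"
  shows "(\<lambda>w. scan (\<lambda>S. P S w) xs (Q w)) \<in> M \<rightarrow>\<^sub>M count_space (Pow V)"
  using Q \<open>set xs \<subseteq> V\<close>
proof (induction xs arbitrary: Q)
  case (Cons x xs)
  have "{w \<in> space M. Q w = S} \<in> sets M" if "S \<subseteq> V" for S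
  proof -
    have "Q -` {S} \<inter> space M \<in> sets M"
      using Cons.prems(1) that \<open>finite V\<close> by (subst (asm) measurable_count_space_eq2) auto
    then show ?thesis
      by (simp add: vimage_def Int_def conj_commute)
  qed
  moreover have "Q w \<subseteq> V" if "w \<in> space M" for w
    using Cons.prems(1) that by (auto simp: measurable_def)
  ultimately have "{w \<in> space M. P (Q w) w} = (\<Union>S\<in>Pow V. {w \<in> space M. Q w = S} \<inter> {w \<in> space M. P S w})"
    "(\<Union>S\<in>Pow V. {w \<in> space M. Q w = S} \<inter> {w \<in> space M. P S w}) \<in> sets M"
    using P \<open>finite V\<close> by (blast, intro sets.finite_UN) auto
  moreover have "(\<lambda>w. insert x (Q w)) \<in> M \<rightarrow>\<^sub>M count_space (Pow V)"
    by (rule measurable_compose[OF Cons.prems(1)]) (use Cons.prems(2) in auto)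
  then have "(\<lambda>w. scan (\<lambda>S. P S w) xs (insert x (Q w))) \<in> M \<rightarrow>\<^sub>M count_space (Pow V)"
    using Cons.IH Cons.prems(2) by simp
  ultimately show ?case
    using Cons.prems(1) by (simp add: measurable_If)
qed simp

lemma measurable_vc_alg_queries:
  assumes "Q \<in> M \<rightarrow>\<^sub>M count_space (Pow V)" "finite V"
    and "\<forall>F\<in>set Es. set (ordF F) \<subseteq> V \<and> (\<forall>S\<subseteq>V. {w \<in> space M. resolved d S w F} \<in> sets M)"
  shows "(\<lambda>w. vc_alg_queries d (Q w) Es ordF w) \<in> M \<rightarrow>\<^sub>M count_space (Pow V)"
  using assms(1,3)
proof (induction Es arbitrary: Q)
  case (Cons F Es)
  have "(\<lambda>w. scan (\<lambda>S. resolved d S w F) (ordF F) (Q w)) \<in> M \<rightarrow>\<^sub>M count_space (Pow V)"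
    using Cons.prems assms(2) by (intro measurable_scan) auto
  then show ?case
    using Cons.IH Cons.prems(2) by simp
qed simp

lemma borel_measurable_vc_alg_cost:
  assumes "valid_instance V E c d" "\<forall>v\<in>V. lo d v < hi d v" "vc_alg_valid V E d VC Es ordF"
  shows "(\<lambda>w. sum c (vc_alg_queries d VC Es ordF w)) \<in> borel_measurable (realizations V d)"
proof -
  have VC: "(\<lambda>_. VC) \<in> PiM V d \<rightarrow>\<^sub>M count_space (Pow V)"
    using assms(3) by (simp add: vc_alg_valid_def is_vertex_cover_def)
  have "\<forall>F\<in>set Es. set (ordF F) \<subseteq> V \<and>
      (\<forall>S\<subseteq>V. {w \<in> space (PiM V d). resolved d S w F} \<in> sets (PiM V d))"
  proof
    fix F
    assume "F \<in> set Es"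
    then have "F \<in> E" "set (ordF F) = F"
      using assms(3) by (auto simp: vc_alg_valid_def)
    then have F: "finite F" "F \<subseteq> V" "set (ordF F) \<subseteq> V"
      using valid_instanceD(2)[OF assms(1)] by auto
    moreover have "\<forall>u\<in>F. sets (d u) = sets borel \<and> lo d u < hi d u"
      using valid_instanceD(5)[OF assms(1)] assms(2) F(2) by blast
    then have "{w \<in> space (PiM V d). resolved d S w F} \<in> sets (PiM V d)" for S
      using F(1,2) by (intro sets_Collect_resolved)
    ultimately show "set (ordF F) \<subseteq> V \<and>
        (\<forall>S\<subseteq>V. {w \<in> space (PiM V d). resolved d S w F} \<in> sets (PiM V d))"
      by simp
  qed
  from measurable_vc_alg_queries[OF VC valid_instanceD(1)[OF assms(1)] this]
  show ?thesis
    unfolding realizations_def by (rule measurable_compose) simp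
qed

lemma prob_space_realizations:
  assumes "valid_instance V E c d"
  shows "prob_space (realizations V d)"
  unfolding realizations_def using valid_instanceD(4)[OF assms] by (rule prob_space_PiM)

lemma integrable_OPT:
  assumes "valid_instance V E c d" "\<forall>v\<in>V. lo d v < hi d v"
  shows "integrable (realizations V d) (OPT V E c d)"
proof -
  interpret prob_space "realizations V d"
    by (rule prob_space_realizations[OF assms(1)])
  have "0 \<le> OPT V E c d w" for w
    using assms(1) by (intro OPT_geI sum_nonneg) (auto dest: valid_instanceD(3))
  moreover have "OPT V E c d w \<le> sum c V" for w
    using OPT_le[OF valid_instanceD(1)[OF assms(1)] order_refl feasible_all_queried[OF assms(1)]] .
  ultimately show ?thesis
    by (intro integrable_const_bound[where B="sum c V"] borel_measurable_OPT[OF assms]) auto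
qed

lemma integrable_vc_alg_cost:
  assumes "valid_instance V E c d" "\<forall>v\<in>V. lo d v < hi d v" "vc_alg_valid V E d VC Es ordF"
  shows "integrable (realizations V d) (\<lambda>w. sum c (vc_alg_queries d VC Es ordF w))"
proof -
  interpret prob_space "realizations V d"
    by (rule prob_space_realizations[OF assms(1)])
  have "\<bar>sum c (vc_alg_queries d VC Es ordF w)\<bar> \<le> sum c V" for w
  proof -
    have sub: "vc_alg_queries d VC Es ordF w \<subseteq> V"
      using assms(1,3) by (rule vc_alg_queries_subset_vertices)
    then have "0 \<le> sum c (vc_alg_queries d VC Es ordF w)"
      using valid_instanceD(3)[OF assms(1)] by (intro sum_nonneg) auto
    moreover have "sum c (vc_alg_queries d VC Es ordF w) \<le> sum c V"
      using sub valid_instanceD(1,3)[OF assms(1)] by (intro sum_mono2) auto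
    ultimately show ?thesis
      by simp
  qed
  then show ?thesis
    by (intro integrable_const_bound[where B="sum c V"] borel_measurable_vc_alg_cost[OF assms]) auto
qed

lemma integral_indicator_component:
  assumes "valid_instance V E c d" "v \<in> V" "B \<in> sets borel"
  shows "(\<integral>w. indicator B (w v) \<partial>realizations V d) = measure (d v) B"
proof -
  have sets_v: "sets (d v) = sets borel"
    using valid_instanceD(5)[OF assms(1,2)] .
  have "(\<lambda>w. w v) \<in> PiM V d \<rightarrow>\<^sub>M d v"
    using assms(2) by (rule measurable_component_singleton)
  moreover have "(indicator B :: real \<Rightarrow> real) \<in> borel_measurable (d v)"
    using assms(3) by (simp add: measurable_cong_sets[OF sets_v refl])
  ultimately have "(\<integral>w. indicator B (w v) \<partial>PiM V d) =
      (\<integral>x. indicator B x \<partial>distr (PiM V d) (d v) (\<lambda>w. w v) :: real)"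
    by (rule integral_distr[symmetric])
  also have "\<dots> = (\<integral>x. indicator B x \<partial>d v)"
    using distr_PiM_component[of V d v] valid_instanceD(4)[OF assms(1)] assms(2) by simp
  also have "\<dots> = measure (d v) B"
    using assms(3) sets_v by (simp add: sets_eq_imp_space_eq)
  finally show ?thesis
    by (simp add: realizations_def)
qed

lemma integrable_indicator_component:
  assumes "valid_instance V E c d" "v \<in> V" "B \<in> sets borel"
  shows "integrable (realizations V d) (\<lambda>w. indicator B (w v) :: real)"
proof -
  interpret prob_space "realizations V d"
    by (rule prob_space_realizations[OF assms(1)])
  have "(\<lambda>w. w v) \<in> borel_measurable (realizations V d)"
    unfolding realizations_def using assms(2) valid_instanceD(5)[OF assms(1,2)]
    by (rule measurable_component_borel)
  then have "(\<lambda>w. indicator B (w v) :: real) \<in> borel_measurable (realizations V d)"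
    using assms(3) by (intro measurable_compose[OF _ borel_measurable_indicator]) auto
  then show ?thesis
    by (intro integrable_const_bound[where B=1]) (auto split: split_indicator)
qed

lemma
  assumes "valid_instance V E c d" "finite I"
    and "\<forall>i\<in>I. u i \<in> V \<and> v i \<in> V \<and> A i \<in> sets borel \<and> B i \<in> sets borel"
  shows integrable_sum_indicator_components:
      "integrable (realizations V d)
         (\<lambda>w. \<Sum>i\<in>I. k i + indicator (A i) (w (u i)) + s i * indicator (B i) (w (v i)) :: real)"
    and integral_sum_indicator_components:
      "(\<integral>w. (\<Sum>i\<in>I. k i + indicator (A i) (w (u i)) + s i * indicator (B i) (w (v i))) \<partial>realizations V d)
       = (\<Sum>i\<in>I. k i + measure (d (u i)) (A i) + s i * measure (d (v i)) (B i))"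
proof -
  interpret prob_space "realizations V d"
    by (rule prob_space_realizations[OF assms(1)])
  have iA: "integrable (realizations V d) (\<lambda>w. indicator (A i) (w (u i)) :: real)"
    and iB: "integrable (realizations V d) (\<lambda>w. indicator (B i) (w (v i)) :: real)"
    and eA: "(\<integral>w. indicator (A i) (w (u i)) \<partial>realizations V d) = measure (d (u i)) (A i)"
    and eB: "(\<integral>w. indicator (B i) (w (v i)) \<partial>realizations V d) = measure (d (v i)) (B i)"
    if "i \<in> I" for i
    using assms(3) that
    by (auto intro!: integrable_indicator_component[OF assms(1)] integral_indicator_component[OF assms(1)])
  have i0: "integrable (realizations V d) (\<lambda>w. k i + indicator (A i) (w (u i)) :: real)"
    and i1: "integrable (realizations V d)
      (\<lambda>w. k i + indicator (A i) (w (u i)) + s i * indicator (B i) (w (v i)) :: real)"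
    if "i \<in> I" for i
    using iA[OF that] iB[OF that] by auto
  then show "integrable (realizations V d)
         (\<lambda>w. \<Sum>i\<in>I. k i + indicator (A i) (w (u i)) + s i * indicator (B i) (w (v i)) :: real)"
    by (intro Bochner_Integration.integrable_sum) auto
  have "(\<integral>w. k i + indicator (A i) (w (u i)) + s i * indicator (B i) (w (v i)) \<partial>realizations V d)
      = k i + measure (d (u i)) (A i) + s i * measure (d (v i)) (B i)" if "i \<in> I" for i
    using i0[OF that] iA[OF that] iB[OF that] eA[OF that] eB[OF that]
    by (simp add: Bochner_Integration.integral_add integrable_mult_right prob_space)
  then show "(\<integral>w. (\<Sum>i\<in>I. k i + indicator (A i) (w (u i)) + s i * indicator (B i) (w (v i))) \<partial>realizations V d)
       = (\<Sum>i\<in>I. k i + measure (d (u i)) (A i) + s i * measure (d (v i)) (B i))"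
    using i1 by (simp add: Bochner_Integration.integral_sum)
qed

section \<open>Uniform distributions on two intervals\<close>

definition uniform_two_intervals :: "real \<Rightarrow> real \<Rightarrow> real \<Rightarrow> real \<Rightarrow> real measure" where
  "uniform_two_intervals p q r s = uniform_measure lborel ({p<..<q} \<union> {r<..<s})"

locale two_intervals =
  fixes p q r s :: real
  assumes p_less_q: "p < q" and q_le_r: "q \<le> r" and r_less_s: "r < s"
begin

abbreviation "U \<equiv> uniform_two_intervals p q r s"

lemma emeasure_support: "emeasure lborel ({p<..<q} \<union> {r<..<s}) = ennreal ((q - p) + (s - r))"
proof -
  have "{p<..<q} \<inter> {r<..<s} = {}"
    using q_le_r by auto
  then have "emeasure lborel ({p<..<q} \<union> {r<..<s}) = emeasure lborel {p<..<q} + emeasure lborel {r<..<s}"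
    by (subst plus_emeasure) auto
  then show ?thesis
    using p_less_q r_less_s by (simp add: ennreal_plus)
qed

lemma prob_space: "prob_space U"
  unfolding uniform_two_intervals_def
  using emeasure_support p_less_q r_less_s by (intro prob_space_uniform_measure) auto

lemma sets_eq: "sets U = sets borel"
  by (simp add: uniform_two_intervals_def)

lemma absolutely_continuous: "absolutely_continuous lborel U"
  unfolding uniform_two_intervals_def uniform_measure_def
  by (rule absolutely_continuousI_density) simp

lemma measure_eq:
  assumes "B \<in> sets borel"
  shows "measure U B = measure lborel (({p<..<q} \<union> {r<..<s}) \<inter> B) / ((q - p) + (s - r))"
proof -
  have "measure lborel ({p<..<q} \<union> {r<..<s}) = (q - p) + (s - r)"
    using emeasure_support p_less_q r_less_s by (simp add: measure_def)
  then show ?thesis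
    unfolding uniform_two_intervals_def
    using emeasure_support assms p_less_q r_less_s by (subst measure_uniform_measure) auto
qed

lemma AE_in_support: "AE x in U. x \<in> {p<..<q} \<union> {r<..<s}"
  unfolding uniform_two_intervals_def by (rule AE_uniform_measureI) auto

lemma measure_atMost_eq_0_iff: "measure U {..a} = 0 \<longleftrightarrow> a \<le> p"
proof
  assume "a \<le> p"
  then have "({p<..<q} \<union> {r<..<s}) \<inter> {..a} = {}"
    using p_less_q q_le_r by auto
  then show "measure U {..a} = 0"
    by (simp add: measure_eq)
next
  assume null: "measure U {..a} = 0"
  show "a \<le> p"
  proof (rule ccontr)
    assume "\<not> a \<le> p"
    define m where "m = min a q"
    have m: "p < m" "m \<le> q" "m \<le> a"
      using \<open>\<not> a \<le> p\<close> p_less_q by (auto simp: m_def)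
    interpret prob_space U
      by (rule prob_space)
    have "({p<..<q} \<union> {r<..<s}) \<inter> {p<..<m} = {p<..<m}"
      using m by auto
    then have "measure U {p<..<m} = (m - p) / ((q - p) + (s - r))"
      using m by (simp add: measure_eq)
    moreover have "measure U {p<..<m} \<le> measure U {..a}"
      using m by (intro finite_measure_mono) (auto simp: sets_eq)
    ultimately show False
      using null m p_less_q r_less_s by (simp add: divide_le_0_iff)
  qed
qed

lemma measure_atLeast_eq_0_iff: "measure U {b..} = 0 \<longleftrightarrow> s \<le> b"
proof
  assume "s \<le> b"
  then have "({p<..<q} \<union> {r<..<s}) \<inter> {b..} = {}"
    using p_less_q q_le_r r_less_s by auto
  then show "measure U {b..} = 0"
    by (simp add: measure_eq)
next
  assume null: "measure U {b..} = 0"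
  show "s \<le> b"
  proof (rule ccontr)
    assume "\<not> s \<le> b"
    define m where "m = max b r"
    have m: "m < s" "r \<le> m" "b \<le> m"
      using \<open>\<not> s \<le> b\<close> r_less_s by (auto simp: m_def)
    interpret prob_space U
      by (rule prob_space)
    have "({p<..<q} \<union> {r<..<s}) \<inter> {m<..<s} = {m<..<s}"
      using m by auto
    then have "measure U {m<..<s} = (s - m) / ((q - p) + (s - r))"
      using m by (simp add: measure_eq)
    moreover have "measure U {m<..<s} \<le> measure U {b..}"
      using m by (intro finite_measure_mono) (auto simp: sets_eq)
    ultimately show False
      using null m p_less_q r_less_s by (simp add: divide_le_0_iff)
  qed
qed

lemma lo_eq: "d v = U \<Longrightarrow> lo d v = p"
  using measure_atMost_eq_0_iff by (simp add: lo_def atMost_def[symmetric])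

lemma hi_eq: "d v = U \<Longrightarrow> hi d v = s"
  using measure_atLeast_eq_0_iff by (simp add: hi_def atLeast_def[symmetric])

end

section \<open>A centre joined to pairs\<close>

lemma one_plus_of_bool_le_card_pair:
  assumes "a \<noteq> b" "X \<inter> {a, b} \<noteq> {}" "P \<Longrightarrow> {a, b} \<subseteq> X"
  shows "1 + of_bool P \<le> real (card (X \<inter> {a, b}))"
proof (cases P)
  case True
  then have "X \<inter> {a, b} = {a, b}"
    using assms(3) by blast
  then show ?thesis
    using True assms(1) by simp
next
  case False
  have "0 < card (X \<inter> {a, b})"
    using assms(2) by (simp add: card_gt_0_iff)
  then show ?thesis
    using False by simp
qed

(* Vertex 0 is the centre; for i < n the vertices 2i+1 and 2i+2 form the i-th pair (a_i, b_i). *)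
locale centred_pairs =
  fixes n :: nat and \<delta> cz \<alpha> \<beta> :: real and E :: "nat set set"
  assumes n_pos: "1 \<le> n" and \<delta>_pos: "0 < \<delta>" and \<delta>_le: "\<delta> \<le> 1/2" and cz_nonneg: "0 \<le> cz"
    and \<alpha>_pos: "0 < \<alpha>" and \<alpha>_le_\<beta>: "\<alpha> \<le> \<beta>" and \<beta>_less: "\<beta> < 10"
    and edges: "\<forall>F\<in>E. F \<subseteq> {..2*n} \<and> 2 \<le> card F"
begin

definition V :: "nat set" where
  "V = {..2*n}"

definition c :: "nat \<Rightarrow> real" where
  "c v = (if v = 0 then cz else 1)"

definition d :: "nat \<Rightarrow> real measure" where
  "d v = (if v = 0 then uniform_two_intervals (1/2) 1 10 (21/2)
          else if odd v then uniform_two_intervals 0 \<alpha> \<beta> 10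
          else uniform_two_intervals 1 (1 + \<delta>) 10 11)"

definition supp :: "nat \<Rightarrow> real set" where
  "supp v = (if v = 0 then {1/2<..<1} \<union> {10<..<21/2}
             else if odd v then {0<..<\<alpha>} \<union> {\<beta><..<10}
             else {1<..<1 + \<delta>} \<union> {10<..<11})"

lemma two_intervals_centre: "two_intervals (1/2) 1 10 (21/2)"
  by unfold_locales auto

lemma two_intervals_odd: "two_intervals 0 \<alpha> \<beta> 10"
  using \<alpha>_pos \<alpha>_le_\<beta> \<beta>_less by unfold_locales auto

lemma two_intervals_even: "two_intervals 1 (1 + \<delta>) 10 11"
  using \<delta>_pos \<delta>_le by unfold_locales auto

lemma lo_d: "lo d v = (if v = 0 then 1/2 else if odd v then 0 else 1)"
  by (cases "v = 0"; cases "odd v")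
    (simp_all add: d_def two_intervals.lo_eq[OF two_intervals_centre]
      two_intervals.lo_eq[OF two_intervals_odd] two_intervals.lo_eq[OF two_intervals_even])

lemma hi_d: "hi d v = (if v = 0 then 21/2 else if odd v then 10 else 11)"
  by (cases "v = 0"; cases "odd v")
    (simp_all add: d_def two_intervals.hi_eq[OF two_intervals_centre]
      two_intervals.hi_eq[OF two_intervals_odd] two_intervals.hi_eq[OF two_intervals_even])

lemma lo_less_hi: "\<forall>v\<in>V. lo d v < hi d v"
  by (simp add: lo_d hi_d)

lemma finite_V: "finite V"
  by (simp add: V_def)

lemma prob_space_d: "prob_space (d v)"
  by (cases "v = 0"; cases "odd v")
    (simp_all add: d_def two_intervals.prob_space[OF two_intervals_centre]
      two_intervals.prob_space[OF two_intervals_odd] two_intervals.prob_space[OF two_intervals_even])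

lemma valid: "valid_instance V E c d"
  unfolding valid_instance_def
proof (intro conjI ballI)
  fix v
  show "prob_space (d v)"
    by (rule prob_space_d)
  show "sets (d v) = sets borel"
    by (cases "v = 0"; cases "odd v")
      (simp_all add: d_def two_intervals.sets_eq[OF two_intervals_centre]
        two_intervals.sets_eq[OF two_intervals_odd] two_intervals.sets_eq[OF two_intervals_even])
  show "absolutely_continuous lborel (d v)"
    by (cases "v = 0"; cases "odd v")
      (simp_all add: d_def two_intervals.absolutely_continuous[OF two_intervals_centre]
        two_intervals.absolutely_continuous[OF two_intervals_odd]
        two_intervals.absolutely_continuous[OF two_intervals_even])
  have "measure (d v) {..lo d v} = 0 \<and> measure (d v) {hi d v..} = 0"
    by (cases "v = 0"; cases "odd v")
      (simp_all add: d_def lo_d hi_d two_intervals.measure_atMost_eq_0_iff[OF two_intervals_centre]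
        two_intervals.measure_atMost_eq_0_iff[OF two_intervals_odd]
        two_intervals.measure_atMost_eq_0_iff[OF two_intervals_even]
        two_intervals.measure_atLeast_eq_0_iff[OF two_intervals_centre]
        two_intervals.measure_atLeast_eq_0_iff[OF two_intervals_odd]
        two_intervals.measure_atLeast_eq_0_iff[OF two_intervals_even])
  then show "\<exists>a b. measure (d v) {..a} = 0 \<and> measure (d v) {b..} = 0"
    by blast
qed (use edges cz_nonneg in \<open>auto simp: V_def c_def\<close>)

lemma AE_supp: "AE w in realizations V d. \<forall>v\<in>V. w v \<in> supp v"
  unfolding realizations_def
proof (rule eventually_ball_finite[OF finite_V], intro ballI AE_PiM_component prob_space_d)
  fix v
  show "AE x in d v. x \<in> supp v"
    using two_intervals.AE_in_support[OF two_intervals_centre]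
      two_intervals.AE_in_support[OF two_intervals_odd] two_intervals.AE_in_support[OF two_intervals_even]
    unfolding d_def supp_def by simp
qed

lemma resolved_iff:
  "resolved d Q w F \<longleftrightarrow> (\<exists>v\<in>F. \<forall>u\<in>F. u \<noteq> v \<longrightarrow>
     (if v \<in> Q then w v else hi d v) \<le> (if u \<in> Q then w u else lo d u))"
  by (rule resolved_iff_bounds) (simp add: lo_d hi_d)

lemma supp_pair:
  assumes "\<forall>v\<in>V. w v \<in> supp v" "i < n"
  shows "(1/2 < w 0 \<and> w 0 < 1) \<or> (10 < w 0 \<and> w 0 < 21/2)"
    "(0 < w (2*i+1) \<and> w (2*i+1) < \<alpha>) \<or> (\<beta> < w (2*i+1) \<and> w (2*i+1) < 10)"
    "(1 < w (2*i+2) \<and> w (2*i+2) < 1 + \<delta>) \<or> (10 < w (2*i+2) \<and> w (2*i+2) < 11)"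
proof -
  have "0 \<in> V" "2*i+1 \<in> V" "2*i+2 \<in> V"
    using assms(2) by (auto simp: V_def)
  then have "w 0 \<in> supp 0" "w (2*i+1) \<in> supp (2*i+1)" "w (2*i+2) \<in> supp (2*i+2)"
    using assms(1) by auto
  then show "(1/2 < w 0 \<and> w 0 < 1) \<or> (10 < w 0 \<and> w 0 < 21/2)"
    "(0 < w (2*i+1) \<and> w (2*i+1) < \<alpha>) \<or> (\<beta> < w (2*i+1) \<and> w (2*i+1) < 10)"
    "(1 < w (2*i+2) \<and> w (2*i+2) < 1 + \<delta>) \<or> (10 < w (2*i+2) \<and> w (2*i+2) < 11)"
    by (auto simp: supp_def)
qed

lemma measure_d:
  assumes "B \<in> sets borel"
  shows "measure (d 0) B = measure lborel (({1/2<..<1} \<union> {10<..<21/2}) \<inter> B)"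
    and "measure (d (2*i+1)) B = measure lborel (({0<..<\<alpha>} \<union> {\<beta><..<10}) \<inter> B) / (\<alpha> + (10 - \<beta>))"
    and "measure (d (2*i+2)) B = measure lborel (({1<..<1 + \<delta>} \<union> {10<..<11}) \<inter> B) / (1 + \<delta>)"
  using two_intervals.measure_eq[OF two_intervals_centre assms]
    two_intervals.measure_eq[OF two_intervals_odd assms] two_intervals.measure_eq[OF two_intervals_even assms]
  by (simp_all add: d_def add.commute)

lemma measure_centre_light: "measure (d 0) {0<..<10} = 1/2"
proof -
  have "({1/2<..<1} \<union> {10<..<21/2}) \<inter> {0<..<10} = {1/2<..<1::real}"
    by auto
  then show ?thesis
    by (simp add: measure_d(1))
qed

lemma measure_centre_heavy: "measure (d 0) {1<..<11} = 1/2"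
proof -
  have "({1/2<..<1} \<union> {10<..<21/2}) \<inter> {1<..<11} = {10<..<21/2::real}"
    by auto
  then show ?thesis
    by (simp add: measure_d(1))
qed

lemma measure_even_light: "measure (d (2*i+2)) {..<10} = \<delta> / (1 + \<delta>)"
proof -
  have "({1<..<1 + \<delta>} \<union> {10<..<11}) \<inter> {..<10} = {1<..<1 + \<delta>}"
    using \<delta>_le by auto
  then show ?thesis
    using measure_d(3)[of "{..<10}" i] \<delta>_pos by simp
qed

lemma measure_even_nonpos: "measure (d (2*i+2)) {..0} = 0"
proof -
  have "({1<..<1 + \<delta>} \<union> {10<..<11}) \<inter> {..0} = ({} :: real set)"
    by auto
  then show ?thesis
    using measure_d(3)[of "{..0}" i] by simp
qed

definition pair_queries :: "(nat \<Rightarrow> bool) \<Rightarrow> (nat \<Rightarrow> bool) \<Rightarrow> nat set" where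
  "pair_queries X Y = insert 0 (\<Union>i<n. {x. (x = 2*i+1 \<and> X i) \<or> (x = 2*i+2 \<and> Y i)})"

lemma centre_in_pair_queries: "0 \<in> pair_queries X Y"
  by (simp add: pair_queries_def)

lemma odd_in_pair_queries_iff: "i < n \<Longrightarrow> 2*i+1 \<in> pair_queries X Y \<longleftrightarrow> X i"
  by (auto simp: pair_queries_def) presburger+

lemma even_in_pair_queries_iff: "i < n \<Longrightarrow> 2*i+2 \<in> pair_queries X Y \<longleftrightarrow> Y i"
  by (auto simp: pair_queries_def) presburger+

lemma pair_queries_subset: "pair_queries X Y \<subseteq> V"
  by (auto simp: pair_queries_def V_def)

lemma pairs_disjoint: "i \<noteq> j \<Longrightarrow> {2*i+1, 2*i+2} \<inter> {2*j+1, (2*j+2::nat)} = {}"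
  by auto

lemma sum_pair_queries: "sum c (pair_queries X Y) = cz + (\<Sum>i<n. of_bool (X i) + of_bool (Y i))"
proof -
  define B where "B i = {x. (x = 2*i+1 \<and> X i) \<or> (x = 2*i+2 \<and> Y i)}" for i
  have B: "B i = (if X i then {2*i+1} else {}) \<union> (if Y i then {2*i+2} else {})" for i
    by (auto simp: B_def)
  have "pair_queries X Y = insert 0 (\<Union>i<n. B i)" "0 \<notin> (\<Union>i<n. B i)"
    by (auto simp: pair_queries_def B_def)
  moreover have "sum c (\<Union>i<n. B i) = (\<Sum>i<n. sum c (B i))"
    using pairs_disjoint by (intro sum.UNION_disjoint) (auto simp: B)
  moreover have "sum c (B i) = of_bool (X i) + of_bool (Y i)" for i
    by (simp add: B c_def)
  moreover have "finite (\<Union>i<n. B i)"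
    by (simp add: B)
  ultimately show ?thesis
    by (simp add: c_def)
qed

lemma sum_card_pairs_le_cost:
  assumes "F \<subseteq> V"
  shows "(\<Sum>i<n. real (card (F \<inter> {2*i+1, 2*i+2}))) \<le> sum c F"
proof -
  have "sum c (F \<inter> {2*i+1, 2*i+2}) = sum (\<lambda>_. 1) (F \<inter> {2*i+1, 2*i+2})" for i
    by (rule sum.cong) (auto simp: c_def)
  then have "sum c (F \<inter> {2*i+1, 2*i+2}) = real (card (F \<inter> {2*i+1, 2*i+2}))" for i
    by simp
  then have "(\<Sum>i<n. real (card (F \<inter> {2*i+1, 2*i+2}))) = (\<Sum>i<n. sum c (F \<inter> {2*i+1, 2*i+2}))"
    by simp
  also have "\<dots> = sum c (\<Union>i<n. F \<inter> {2*i+1, 2*i+2})"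
    using pairs_disjoint by (intro sum.UNION_disjoint[symmetric]) auto
  also have "\<dots> \<le> sum c F"
    using assms finite_subset[OF assms finite_V] cz_nonneg by (intro sum_mono2) (auto simp: c_def)
  finally show ?thesis .
qed

lemma vc_contains_pair_vertex:
  assumes "vc_alg_valid V E d VC Es ordF" "F \<in> E" "2*i+1 \<in> F" "2*i+2 \<in> F"
  shows "2*i+1 \<in> VC \<or> 2*i+2 \<in> VC"
proof -
  have "(5::real) \<in> ival d (2*i+1) \<inter> ival d (2*i+2)"
    by (simp add: ival_def lo_d hi_d)
  then have "vc_edge E d (2*i+1) (2*i+2)"
    using assms(2-4) unfolding vc_edge_def by (intro conjI bexI[OF _ assms(2)]) (auto simp: lo_d)
  then show ?thesis
    using assms(1) by (auto simp: vc_alg_valid_def is_vertex_cover_def vc_graph_edge_def)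
qed

(* Pair i costs at least 1 + Pr[w 0 \<in> Z \<and> w v \<notin> W] \<ge> 1 + Pr[w 0 \<in> Z] - Pr[w v \<in> W],
   where v, Z and W are the vertex and the events of the forcing hypothesis that applies to it. *)
lemma expected_alg_ge_pairs:
  assumes valid_alg: "vc_alg_valid V E d VC Es ordF"
    and cover: "\<forall>i<n. 2*i+1 \<in> VC \<or> 2*i+2 \<in> VC"
    and odd_covered: "\<And>i w. i < n \<Longrightarrow> 2*i+1 \<in> VC \<Longrightarrow> w 0 \<in> ZB \<Longrightarrow> w (2*i+1) \<notin> AB
               \<Longrightarrow> 2*i+2 \<in> vc_alg_queries d VC Es ordF w"
    and odd_uncovered: "\<And>i w. i < n \<Longrightarrow> 2*i+1 \<notin> VC \<Longrightarrow> w 0 \<in> ZA \<Longrightarrow> w (2*i+2) \<notin> BB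
               \<Longrightarrow> 2*i+1 \<in> vc_alg_queries d VC Es ordF w"
    and Borel: "ZA \<in> sets borel" "ZB \<in> sets borel" "AB \<in> sets borel" "BB \<in> sets borel"
  shows "(\<Sum>i<n. if 2*i+1 \<in> VC then 1 + measure (d 0) ZB - measure (d (2*i+1)) AB
                 else 1 + measure (d 0) ZA - measure (d (2*i+2)) BB) \<le> expected_alg V c d VC Es ordF"
proof -
  let ?A = "\<lambda>w. vc_alg_queries d VC Es ordF w"
  define Z where "Z i = (if 2*i+1 \<in> VC then ZB else ZA)" for i
  define v where "v i = (if 2*i+1 \<in> VC then 2*i+1 else 2*i+2)" for i :: nat
  define W where "W i = (if 2*i+1 \<in> VC then AB else BB)" for i
  let ?g = "\<lambda>w. (\<Sum>i<n. 1 + indicator (Z i) (w 0) + (-1) * indicator (W i) (w (v i)) :: real)"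
  have cond: "\<forall>i\<in>{..<n}. 0 \<in> V \<and> v i \<in> V \<and> Z i \<in> sets borel \<and> W i \<in> sets borel"
    using Borel by (auto simp: v_def Z_def W_def V_def)
  have "?g w \<le> sum c (?A w)" for w
  proof -
    have "1 + indicator (Z i) (w 0) + (-1) * indicator (W i) (w (v i))
        \<le> real (card (?A w \<inter> {2*i+1, 2*i+2}))" if i: "i < n" for i
    proof -
      have "1 + indicator (Z i) (w 0) + (-1) * indicator (W i) (w (v i))
          \<le> 1 + (of_bool (w 0 \<in> Z i \<and> w (v i) \<notin> W i) :: real)"
        by (simp split: split_indicator)
      also have "\<dots> \<le> real (card (?A w \<inter> {2*i+1, 2*i+2}))"
      proof (rule one_plus_of_bool_le_card_pair)
        show "?A w \<inter> {2*i+1, 2*i+2} \<noteq> {}"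
          using cover i subset_vc_alg_queries[of VC d Es ordF w] by blast
        show "{2*i+1, 2*i+2} \<subseteq> ?A w" if "w 0 \<in> Z i \<and> w (v i) \<notin> W i"
          using that cover i odd_covered[OF i] odd_uncovered[OF i] subset_vc_alg_queries[of VC d Es ordF w]
          by (cases "2*i+1 \<in> VC") (auto simp: v_def Z_def W_def)
      qed simp
      finally show ?thesis .
    qed
    then have "?g w \<le> (\<Sum>i<n. real (card (?A w \<inter> {2*i+1, 2*i+2})))"
      by (intro sum_mono) auto
    also have "\<dots> \<le> sum c (?A w)"
      by (intro sum_card_pairs_le_cost vc_alg_queries_subset_vertices[OF valid valid_alg])
    finally show ?thesis .
  qed
  then have "(\<integral>w. ?g w \<partial>realizations V d) \<le> expected_alg V c d VC Es ordF"
    unfolding expected_alg_def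
    by (intro integral_mono integrable_sum_indicator_components[OF valid _ cond]
        integrable_vc_alg_cost[OF valid lo_less_hi valid_alg]) auto
  moreover have "(\<integral>w. ?g w \<partial>realizations V d) =
      (\<Sum>i<n. 1 + measure (d 0) (Z i) + (-1) * measure (d (v i)) (W i))"
    by (rule integral_sum_indicator_components[OF valid _ cond]) simp
  ultimately show ?thesis
    by (simp add: v_def Z_def W_def if_distrib cong: if_cong)
qed

lemma expected_OPT_le_pairs:
  assumes feasible: "\<And>w. \<forall>v\<in>V. w v \<in> supp v \<Longrightarrow>
        feasible E d (pair_queries (\<lambda>i. P w \<or> w (2*i+2) \<in> BB) (\<lambda>i. \<not> P w \<or> w (2*i+1) \<in> AA)) w"
    and Borel: "AA \<in> sets borel" "BB \<in> sets borel"
  shows "expected_OPT V E c d \<le> cz + (\<Sum>i<n. 1 + measure (d (2*i+2)) BB + 1 * measure (d (2*i+1)) AA)"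
proof -
  interpret prob_space "realizations V d"
    by (rule prob_space_realizations[OF valid])
  let ?g = "\<lambda>w. (\<Sum>i<n. 1 + indicator BB (w (2*i+2)) + 1 * indicator AA (w (2*i+1)) :: real)"
  have cond: "\<forall>i\<in>{..<n}. 2*i+2 \<in> V \<and> 2*i+1 \<in> V \<and> BB \<in> sets borel \<and> AA \<in> sets borel"
    using Borel by (auto simp: V_def)
  have g: "integrable (realizations V d) ?g"
    by (rule integrable_sum_indicator_components[OF valid _ cond]) simp
  have "OPT V E c d w \<le> cz + ?g w" if "\<forall>v\<in>V. w v \<in> supp v" for w
  proof -
    let ?Q = "pair_queries (\<lambda>i. P w \<or> w (2*i+2) \<in> BB) (\<lambda>i. \<not> P w \<or> w (2*i+1) \<in> AA)"
    have "OPT V E c d w \<le> sum c ?Q"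
      by (rule OPT_le[OF finite_V pair_queries_subset feasible[OF that]])
    also have "\<dots> = cz + (\<Sum>i<n. of_bool (P w \<or> w (2*i+2) \<in> BB) + of_bool (\<not> P w \<or> w (2*i+1) \<in> AA))"
      by (rule sum_pair_queries)
    also have "\<dots> \<le> cz + ?g w"
      by (intro add_left_mono sum_mono) (auto split: split_indicator)
    finally show ?thesis .
  qed
  then have "(\<integral>w. OPT V E c d w \<partial>realizations V d) \<le> (\<integral>w. cz + ?g w \<partial>realizations V d)"
    using AE_supp g by (intro integral_mono_AE integrable_OPT[OF valid lo_less_hi]) auto
  also have "\<dots> = cz + (\<integral>w. ?g w \<partial>realizations V d)"
    using g by (simp add: prob_space)
  also have "(\<integral>w. ?g w \<partial>realizations V d) = (\<Sum>i<n. 1 + measure (d (2*i+2)) BB + 1 * measure (d (2*i+1)) AA)"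
    by (rule integral_sum_indicator_components[OF valid _ cond]) simp
  finally show ?thesis
    unfolding expected_OPT_def .
qed

lemma one_le_expected_OPT:
  assumes "\<And>w Q. 0 < w 0 \<Longrightarrow> Q \<subseteq> V \<Longrightarrow> feasible E d Q w \<Longrightarrow> 1 \<in> Q \<or> 2 \<in> Q"
  shows "1 \<le> expected_OPT V E c d"
proof -
  interpret prob_space "realizations V d"
    by (rule prob_space_realizations[OF valid])
  have "1 \<le> OPT V E c d w" if w0: "0 < w 0" for w
  proof (rule OPT_geI[OF valid])
    fix Q
    assume Q: "Q \<subseteq> V" "feasible E d Q w"
    then obtain x where "x \<in> Q" "x \<in> {1, 2}"
      using assms[of w Q] w0 by blast
    then have "c x \<le> sum c Q"
      using Q(1) finite_subset[OF Q(1) finite_V] cz_nonneg by (intro member_le_sum) (auto simp: c_def)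
    then show "1 \<le> sum c Q"
      using \<open>x \<in> {1, 2}\<close> by (auto simp: c_def)
  qed
  moreover have "AE w in realizations V d. 0 < w 0"
    using AE_supp
  proof eventually_elim
    fix w
    assume "\<forall>v\<in>V. w v \<in> supp v"
    then have "w 0 \<in> supp 0"
      by (simp add: V_def)
    then show "0 < w 0"
      by (auto simp: supp_def)
  qed
  ultimately have "AE w in realizations V d. 1 \<le> OPT V E c d w"
    by auto
  then have "(\<integral>w. 1 \<partial>realizations V d) \<le> expected_OPT V E c d"
    unfolding expected_OPT_def by (intro integral_mono_AE integrable_OPT[OF valid lo_less_hi]) auto
  then show ?thesis
    by (simp add: prob_space)
qed

end

section \<open>Hyperedge instances\<close>

definition pair_hyperedges :: "nat \<Rightarrow> nat set set" where
  "pair_hyperedges n = (\<lambda>i. {2*i+1, 2*i+2, 0}) ` {..<n}"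

locale hyperedge_pairs =
  fixes n :: nat and \<delta> cz :: real
  assumes "1 \<le> n" "0 < \<delta>" "\<delta> \<le> 1/2" "0 \<le> cz"

sublocale hyperedge_pairs \<subseteq> centred_pairs n \<delta> cz \<delta> 1 "pair_hyperedges n"
  using hyperedge_pairs_axioms
  by unfold_locales (auto simp: hyperedge_pairs_def pair_hyperedges_def)

context hyperedge_pairs
begin

lemma hyperedge_unresolved_without_even:
  assumes "1 < w 0" "w 0 < 11" "1 < w (2*i+1)" "w (2*i+1) < 11" "2*i+2 \<notin> Q"
  shows "\<not> resolved d Q w {2*i+1, 2*i+2, 0}"
  using assms unfolding resolved_iff by (auto simp: lo_d hi_d)

lemma hyperedge_unresolved_without_odd:
  assumes "0 < w 0" "w 0 < 10" "0 < w (2*i+2)" "2*i+1 \<notin> Q"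
  shows "\<not> resolved d Q w {2*i+1, 2*i+2, 0}"
  using assms unfolding resolved_iff by (auto simp: lo_d hi_d)

lemma feasible_pair_queries:
  assumes "\<forall>v\<in>V. w v \<in> supp v"
  shows "feasible (pair_hyperedges n) d
    (pair_queries (\<lambda>i. w 0 < 5 \<or> w (2*i+2) \<in> {..<10}) (\<lambda>i. \<not> w 0 < 5 \<or> w (2*i+1) \<in> {})) w"
  unfolding feasible_def pair_hyperedges_def
proof (intro ballI, elim imageE)
  fix F i
  let ?Q = "pair_queries (\<lambda>i. w 0 < 5 \<or> w (2*i+2) \<in> {..<10}) (\<lambda>i. \<not> w 0 < 5 \<or> w (2*i+1) \<in> {})"
  assume F: "F = {2*i+1, 2*i+2, 0}" and "i \<in> {..<n}"
  then have i: "i < n"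
    by simp
  note w = supp_pair[OF assms i]
  have Q: "0 \<in> ?Q" "2*i+1 \<in> ?Q \<longleftrightarrow> w 0 < 5 \<or> w (2*i+2) < 10" "2*i+2 \<in> ?Q \<longleftrightarrow> \<not> w 0 < 5"
    using odd_in_pair_queries_iff[OF i] even_in_pair_queries_iff[OF i] centre_in_pair_queries by auto
  consider "w 0 < 5" "w (2*i+1) \<le> w 0" | "w 0 < 5" "w 0 < w (2*i+1)"
    | "\<not> w 0 < 5" "w (2*i+2) < 10" | "\<not> w 0 < 5" "\<not> w (2*i+2) < 10"
    by linarith
  then show "resolved d ?Q w F"
  proof cases
    case 1
    then show ?thesis
      unfolding F resolved_iff using w Q by (intro bexI[of _ "2*i+1"]) (auto simp: lo_d hi_d)
  next
    case 2
    then show ?thesis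
      unfolding F resolved_iff using w Q by (intro bexI[of _ 0]) (auto simp: lo_d hi_d)
  next
    case 3
    then show ?thesis
      unfolding F using Q by (intro resolved_if_queried) auto
  next
    case 4
    then show ?thesis
      unfolding F resolved_iff using w Q by (intro bexI[of _ "2*i+1"]) (auto simp: lo_d hi_d)
  qed
qed

lemma measure_odd_outside: "measure (d (2*i+1)) (- {1<..<11}) = \<delta> / (\<delta> + 9)"
proof -
  have "({0<..<\<delta>} \<union> {1<..<10}) \<inter> - {1<..<11} = {0<..<\<delta>}"
    using \<delta>_le by auto
  then show ?thesis
    using measure_d(2)[of "- {1<..<11}" i] \<delta>_pos by (simp add: add.commute)
qed

lemma expected_OPT_upper: "expected_OPT V (pair_hyperedges n) c d \<le> cz + n * (1 + \<delta> / (1 + \<delta>))"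
proof -
  have "expected_OPT V (pair_hyperedges n) c d
      \<le> cz + (\<Sum>i<n. 1 + measure (d (2*i+2)) {..<10} + 1 * measure (d (2*i+1)) {})"
    by (rule expected_OPT_le_pairs[OF feasible_pair_queries]) auto
  then show ?thesis
    unfolding measure_even_light by simp
qed

lemma hyperedge_unresolved_without_pair:
  assumes "0 < w 0" "1 \<notin> Q" "2 \<notin> Q"
  shows "\<not> resolved d Q w {1, 2, 0}"
  using assms unfolding resolved_iff by (auto simp: lo_d hi_d)

lemma expected_OPT_lower: "1 \<le> expected_OPT V (pair_hyperedges n) c d"
proof (rule one_le_expected_OPT)
  fix w Q
  assume "0 < w 0" "feasible (pair_hyperedges n) d Q w"
  moreover have "{1, 2, 0} \<in> pair_hyperedges n"
    using n_pos by (force simp: pair_hyperedges_def)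
  ultimately show "1 \<in> Q \<or> 2 \<in> Q"
    using hyperedge_unresolved_without_pair[of w Q] by (auto simp: feasible_def)
qed

lemma expected_alg_lower:
  assumes "vc_alg_valid V (pair_hyperedges n) d VC Es ordF"
  shows "n * (3/2 - \<delta> / (\<delta> + 9)) \<le> expected_alg V c d VC Es ordF"
proof -
  have F: "{2*i+1, 2*i+2, 0} \<in> pair_hyperedges n" if "i < n" for i
    using that by (auto simp: pair_hyperedges_def)
  have "(\<Sum>i<n. if 2*i+1 \<in> VC then 1 + measure (d 0) {1<..<11} - measure (d (2*i+1)) (- {1<..<11})
                 else 1 + measure (d 0) {0<..<10} - measure (d (2*i+2)) {..0})
      \<le> expected_alg V c d VC Es ordF"
  proof (rule expected_alg_ge_pairs[OF assms])
    show "\<forall>i<n. 2*i+1 \<in> VC \<or> 2*i+2 \<in> VC"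
      using vc_contains_pair_vertex[OF assms F] by auto
    have alg: "set Es = pair_hyperedges n" "\<forall>F\<in>pair_hyperedges n. set (ordF F) = F"
      using assms by (auto simp: vc_alg_valid_def)
    fix i w
    assume i: "i < n"
    show "2*i+2 \<in> vc_alg_queries d VC Es ordF w"
      if "w 0 \<in> {1<..<11}" "w (2*i+1) \<notin> - {1<..<11}"
      using that by (intro vc_alg_queries_forced[OF alg F[OF i]] hyperedge_unresolved_without_even) auto
    show "2*i+1 \<in> vc_alg_queries d VC Es ordF w"
      if "w 0 \<in> {0<..<10}" "w (2*i+2) \<notin> {..0}"
      using that by (intro vc_alg_queries_forced[OF alg F[OF i]] hyperedge_unresolved_without_odd) auto
  qed auto
  moreover have "n * (3/2 - \<delta> / (\<delta> + 9)) \<le>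
      (\<Sum>i<n. if 2*i+1 \<in> VC then 1 + measure (d 0) {1<..<11} - measure (d (2*i+1)) (- {1<..<11})
                 else 1 + measure (d 0) {0<..<10} - measure (d (2*i+2)) {..0})"
  proof -
    have "3/2 - \<delta> / (\<delta> + 9) \<le>
        (if 2*i+1 \<in> VC then 1 + measure (d 0) {1<..<11} - measure (d (2*i+1)) (- {1<..<11})
         else 1 + measure (d 0) {0<..<10} - measure (d (2*i+2)) {..0})" for i
      unfolding measure_centre_light measure_centre_heavy measure_odd_outside measure_even_nonpos
      using \<delta>_pos by simp
    then show ?thesis
      using sum_mono[of "{..<n}" "\<lambda>_. 3/2 - \<delta> / (\<delta> + 9)"] by simp
  qed
  ultimately show ?thesis
    by linarith
qed

lemma vc_edge_odd_even:
  assumes "vc_edge (pair_hyperedges n) d a b"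
  shows "odd a \<and> even b"
proof -
  obtain F where F: "F \<in> pair_hyperedges n" "b \<in> F" "a \<in> F" "\<forall>x\<in>F. lo d a \<le> lo d x" and "b \<noteq> a"
    using assms unfolding vc_edge_def by blast
  then obtain i where i: "F = {2*i+1, 2*i+2, 0}"
    by (auto simp: pair_hyperedges_def)
  then have "lo d a \<le> 0"
    using F(4) by (force simp: lo_d)
  then have "odd a" "a \<noteq> 0"
    by (auto simp: lo_d split: if_splits)
  then show ?thesis
    using F(2,3) \<open>b \<noteq> a\<close> i by auto
qed

lemma vc_bipartite: "vc_bipartite V (pair_hyperedges n) d"
  unfolding vc_bipartite_def
proof (intro exI[of _ "{v \<in> V. odd v}"] conjI allI impI)
  fix u v
  assume "vc_graph_edge (pair_hyperedges n) d u v"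
  then have e: "vc_edge (pair_hyperedges n) d u v \<or> vc_edge (pair_hyperedges n) d v u"
    by (simp add: vc_graph_edge_def)
  then have "u \<in> V" "v \<in> V"
    using valid_instanceD(2)[OF valid] unfolding vc_edge_def by blast+
  then show "u \<in> {v \<in> V. odd v} \<longleftrightarrow> v \<notin> {v \<in> V. odd v}"
    using e vc_edge_odd_even[of u v] vc_edge_odd_even[of v u] by auto
qed auto

lemma lower_bound_instance:
  assumes "\<eta> \<le> 3/2" "8 * \<delta> \<le> \<eta>" "3 * cz \<le> \<eta> * n"
  shows "lower_bound_instance \<eta> V (pair_hyperedges n) c d"
proof (rule lower_bound_instanceI[OF valid _ expected_OPT_upper expected_alg_lower _ assms(1)])
  show "0 < expected_OPT V (pair_hyperedges n) c d"
    using expected_OPT_lower by linarith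
  have "\<delta> / (1 + \<delta>) \<le> \<delta>" "\<delta> / (\<delta> + 9) \<le> \<delta>"
    using \<delta>_pos by (simp_all add: divide_le_eq)
  then show "(3/2 - \<eta>) * (cz + n * (1 + \<delta> / (1 + \<delta>))) \<le> n * (3/2 - \<delta> / (\<delta> + 9))"
    using assms \<delta>_pos cz_nonneg by (intro ratio_bound) auto
qed

end

section \<open>Triangle instances\<close>

definition pair_triangles :: "nat \<Rightarrow> nat set set" where
  "pair_triangles n = (\<Union>i<n. {{0, 2*i+1}, {0, 2*i+2}, {2*i+1, 2*i+2}})"

lemma card_pair_triangles: "F \<in> pair_triangles n \<Longrightarrow> card F = 2"
  by (auto simp: pair_triangles_def)

lemma pair_triangles_not_bipartite:
  assumes "1 \<le> n"
  shows "\<not> graph_bipartite V (pair_triangles n)"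
proof
  assume "graph_bipartite V (pair_triangles n)"
  then obtain X where X: "\<forall>F\<in>pair_triangles n. card (F \<inter> X) = 1"
    unfolding graph_bipartite_def by blast
  have "{0, 1} \<in> pair_triangles n" "{0, 2} \<in> pair_triangles n" "{1, 2} \<in> pair_triangles n"
    using assms by (auto simp: pair_triangles_def numeral_2_eq_2 intro!: bexI[of _ 0])
  then have "card ({0, 1} \<inter> X) = 1" "card ({0, 2} \<inter> X) = 1" "card ({1, 2} \<inter> X) = 1"
    using X by auto
  then show False
    by (cases "(0::nat) \<in> X"; cases "(1::nat) \<in> X"; cases "(2::nat) \<in> X") auto
qed

locale triangle_pairs =
  fixes n :: nat and \<delta> :: real
  assumes "1 \<le> n" "0 < \<delta>" "\<delta> \<le> 1/2"

sublocale triangle_pairs \<subseteq> centred_pairs n \<delta> 1 1 "10 - \<delta>" "pair_triangles n"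
  using triangle_pairs_axioms
  by unfold_locales (auto simp: triangle_pairs_def pair_triangles_def)

context triangle_pairs
begin

lemma edge_unresolved_without_even:
  assumes "1 < w 0" "w 0 < 11" "2*i+2 \<notin> Q"
  shows "\<not> resolved d Q w {0, 2*i+2}"
  using assms unfolding resolved_iff by (auto simp: lo_d hi_d)

lemma edge_unresolved_without_odd:
  assumes "0 < w 0" "w 0 < 10" "2*i+1 \<notin> Q"
  shows "\<not> resolved d Q w {0, 2*i+1}"
  using assms unfolding resolved_iff by (auto simp: lo_d hi_d)

lemma edge_unresolved_without_pair:
  assumes "1 \<notin> Q" "2 \<notin> Q"
  shows "\<not> resolved d Q w {1, 2}"
  using assms unfolding resolved_iff by (auto simp: lo_d hi_d)

lemma feasible_pair_queries:
  assumes "\<forall>v\<in>V. w v \<in> supp v"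
  shows "feasible (pair_triangles n) d
    (pair_queries (\<lambda>i. w 0 < 5 \<or> w (2*i+2) \<in> {..<10}) (\<lambda>i. \<not> w 0 < 5 \<or> w (2*i+1) \<in> {1<..})) w"
  unfolding feasible_def pair_triangles_def
proof (intro ballI, elim UN_E)
  fix F i
  let ?Q = "pair_queries (\<lambda>i. w 0 < 5 \<or> w (2*i+2) \<in> {..<10}) (\<lambda>i. \<not> w 0 < 5 \<or> w (2*i+1) \<in> {1<..})"
  assume F: "F \<in> {{0, 2*i+1}, {0, 2*i+2}, {2*i+1, 2*i+2}}" and "i \<in> {..<n}"
  then have i: "i < n"
    by simp
  note w = supp_pair[OF assms i]
  have Q: "0 \<in> ?Q" "2*i+1 \<in> ?Q \<longleftrightarrow> w 0 < 5 \<or> w (2*i+2) < 10"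
      "2*i+2 \<in> ?Q \<longleftrightarrow> \<not> w 0 < 5 \<or> 1 < w (2*i+1)"
    using odd_in_pair_queries_iff[OF i] even_in_pair_queries_iff[OF i] centre_in_pair_queries by auto
  consider "F = {0, 2*i+1}" | "F = {0, 2*i+2}" | "F = {2*i+1, 2*i+2}"
    using F by blast
  note cases_F = this
  show "resolved d ?Q w F"
  proof (cases "w 0 < 5")
    case light: True
    show ?thesis
    proof (cases "2*i+2 \<in> ?Q")
      case True
      then show ?thesis
        using F Q light by (intro resolved_if_queried) auto
    next
      case False
      then have "2*i+1 \<in> ?Q" "w (2*i+1) \<le> 1"
        using Q light by auto
      with cases_F show ?thesis
      proof cases
        case 1
        then show ?thesis
          using Q \<open>2*i+1 \<in> ?Q\<close> by (intro resolved_if_queried) auto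
      next
        case 2
        then show ?thesis
          unfolding resolved_iff using w Q light False by (intro bexI[of _ 0]) (auto simp: lo_d hi_d)
      next
        case 3
        then show ?thesis
          unfolding resolved_iff using Q False \<open>2*i+1 \<in> ?Q\<close> \<open>w (2*i+1) \<le> 1\<close>
          by (intro bexI[of _ "2*i+1"]) (auto simp: lo_d hi_d)
      qed
    qed
  next
    case heavy: False
    show ?thesis
    proof (cases "2*i+1 \<in> ?Q")
      case True
      then show ?thesis
        using F Q heavy by (intro resolved_if_queried) auto
    next
      case False
      then have "2*i+2 \<in> ?Q" "10 \<le> w (2*i+2)" "10 < w 0"
        using Q heavy w by auto
      with cases_F show ?thesis
      proof cases
        case 2
        then show ?thesis
          using Q \<open>2*i+2 \<in> ?Q\<close> by (intro resolved_if_queried) auto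
      qed (unfold resolved_iff, use Q False \<open>2*i+2 \<in> ?Q\<close> \<open>10 \<le> w (2*i+2)\<close> \<open>10 < w 0\<close> in
          \<open>intro bexI[of _ "2*i+1"], auto simp: lo_d hi_d\<close>)+
    qed
  qed
qed

lemma measure_odd_heavy: "measure (d (2*i+1)) {1<..} = \<delta> / (1 + \<delta>)"
proof -
  have "({0<..<1} \<union> {10 - \<delta><..<10}) \<inter> {1<..} = {10 - \<delta><..<10}"
    using \<delta>_le by auto
  then show ?thesis
    using measure_d(2)[of "{1<..}" i] \<delta>_pos by (simp add: add.commute)
qed

lemma expected_OPT_upper: "expected_OPT V (pair_triangles n) c d \<le> 1 + n * (1 + 2 * \<delta> / (1 + \<delta>))"
proof -
  have "expected_OPT V (pair_triangles n) c d
      \<le> 1 + (\<Sum>i<n. 1 + measure (d (2*i+2)) {..<10} + 1 * measure (d (2*i+1)) {1<..})"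
    by (rule expected_OPT_le_pairs[OF feasible_pair_queries]) auto
  then show ?thesis
    unfolding measure_even_light measure_odd_heavy by (simp add: add.commute)
qed

lemma expected_OPT_lower: "1 \<le> expected_OPT V (pair_triangles n) c d"
proof (rule one_le_expected_OPT)
  fix w Q
  assume "feasible (pair_triangles n) d Q w"
  moreover have "{1, 2} \<in> pair_triangles n"
    using n_pos by (force simp: pair_triangles_def)
  ultimately show "1 \<in> Q \<or> 2 \<in> Q"
    using edge_unresolved_without_pair[of Q w] by (auto simp: feasible_def)
qed

lemma expected_alg_lower:
  assumes "vc_alg_valid V (pair_triangles n) d VC Es ordF"
  shows "n * (3/2) \<le> expected_alg V c d VC Es ordF"
proof -
  have F: "{0, 2*i+1} \<in> pair_triangles n" "{0, 2*i+2} \<in> pair_triangles n"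
      "{2*i+1, 2*i+2} \<in> pair_triangles n" if "i < n" for i
    using that by (auto simp: pair_triangles_def)
  have "(\<Sum>i<n. if 2*i+1 \<in> VC then 1 + measure (d 0) {1<..<11} - measure (d (2*i+1)) {}
                 else 1 + measure (d 0) {0<..<10} - measure (d (2*i+2)) {})
      \<le> expected_alg V c d VC Es ordF"
  proof (rule expected_alg_ge_pairs[OF assms])
    show "\<forall>i<n. 2*i+1 \<in> VC \<or> 2*i+2 \<in> VC"
      using vc_contains_pair_vertex[OF assms F(3)] by auto
    have alg: "set Es = pair_triangles n" "\<forall>F\<in>pair_triangles n. set (ordF F) = F"
      using assms by (auto simp: vc_alg_valid_def)
    fix i w
    assume i: "i < n"
    show "2*i+2 \<in> vc_alg_queries d VC Es ordF w" if "w 0 \<in> {1<..<11}"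
      using that by (intro vc_alg_queries_forced[OF alg F(2)[OF i]] edge_unresolved_without_even) auto
    show "2*i+1 \<in> vc_alg_queries d VC Es ordF w" if "w 0 \<in> {0<..<10}"
      using that by (intro vc_alg_queries_forced[OF alg F(1)[OF i]] edge_unresolved_without_odd) auto
  qed auto
  then show ?thesis
    unfolding measure_centre_light measure_centre_heavy measure_empty by simp
qed

lemma lower_bound_instance:
  assumes "\<eta> \<le> 3/2" "8 * \<delta> \<le> \<eta>" "3 \<le> \<eta> * n"
  shows "lower_bound_instance \<eta> V (pair_triangles n) c d"
proof (rule lower_bound_instanceI[OF valid _ expected_OPT_upper expected_alg_lower _ assms(1)])
  show "0 < expected_OPT V (pair_triangles n) c d"
    using expected_OPT_lower by linarith
  have "2 * \<delta> / (1 + \<delta>) \<le> 2 * \<delta>"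
    using \<delta>_pos by (simp add: divide_le_eq)
  then have "(3/2 - \<eta>) * (1 + n * (1 + 2 * \<delta> / (1 + \<delta>))) \<le> n * (3/2 - 0)"
    using assms \<delta>_pos by (intro ratio_bound) auto
  then show "(3/2 - \<eta>) * (1 + n * (1 + 2 * \<delta> / (1 + \<delta>))) \<le> n * (3/2)"
    by simp
qed

end

theorem theorem2p5:
  fixes \<eta> :: real
  assumes "0 < \<eta>"
  shows "(\<exists>V E c d. lower_bound_instance \<eta> V E c d \<and> card E = 1)
       \<and> (\<exists>V E c d. lower_bound_instance \<eta> V E c d \<and> (\<forall>v\<in>V. c v = 1)
                   \<and> vc_bipartite V E d)
       \<and> (\<exists>V E c d. lower_bound_instance \<eta> V E c d \<and> (\<forall>v\<in>V. c v = 1)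
                   \<and> (\<forall>F\<in>E. card F = 2) \<and> \<not> graph_bipartite V E)"
proof -
  define \<eta>' where "\<eta>' = min \<eta> 1"
  have \<eta>': "0 < \<eta>'" "\<eta>' \<le> 1" "\<eta>' \<le> \<eta>"
    using assms by (auto simp: \<eta>'_def)
  obtain N :: nat where "3 < \<eta>' * N"
    using ex_less_of_nat_mult[OF \<eta>'(1), of 3] by (auto simp: mult.commute)
  then have N: "1 \<le> N" "3 \<le> \<eta>' * N"
    by (auto simp: Suc_le_eq intro: Nat.gr0I)
  interpret single: hyperedge_pairs 1 "\<eta>' / 8" 0
    using \<eta>' by unfold_locales auto
  interpret many: hyperedge_pairs N "\<eta>' / 8" 1
    using \<eta>' N by unfold_locales auto
  interpret triangles: triangle_pairs N "\<eta>' / 8"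
    using \<eta>' N by unfold_locales auto
  have "lower_bound_instance \<eta> single.V (pair_hyperedges 1) single.c single.d"
    using \<eta>' by (intro lower_bound_instance_mono[OF single.lower_bound_instance]) auto
  moreover have "card (pair_hyperedges 1) = 1"
    by (simp add: pair_hyperedges_def lessThan_Suc)
  moreover have "lower_bound_instance \<eta> many.V (pair_hyperedges N) many.c many.d"
    using \<eta>' N by (intro lower_bound_instance_mono[OF many.lower_bound_instance]) auto
  moreover have "lower_bound_instance \<eta> triangles.V (pair_triangles N) triangles.c triangles.d"
    using \<eta>' N by (intro lower_bound_instance_mono[OF triangles.lower_bound_instance]) auto
  moreover have "\<forall>v. many.c v = 1" "\<forall>v. triangles.c v = 1"
    by (simp_all add: many.c_def triangles.c_def)
  ultimately show ?thesis
    using many.vc_bipartite card_pair_triangles pair_triangles_not_bipartite[OF N(1)] by blast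
qed

end
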